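(* Let $\mathbb X$ be a basic space and $\mathcal D=(D,<,\rho)$ a computable partially ordered set. The classes $\mathrm{Max}_{\mathrm{Rec}}[\mathbb X\to\mathcal D]$ and $\mathrm{Max}_{\mathrm{PR}}[\mathbb X\to\mathcal D]$ contain the same total functions: $\mathrm{Max}_{\mathrm{PR}}[\mathbb X\to\mathcal D]\cap D^{\mathbb X}=\mathrm{Max}_{\mathrm{Rec}}[\mathbb X\to\mathcal D]\cap D^{\mathbb X}$.
   Context: A basic space is a finite non-empty product of sets each of which is $\mathbb N$, $\mathbb Z$, or $A^*$ for some finite alphabet $A$. A computable partially ordered set is a triple $\mathcal D=(D,<,\rho)$ where $\rho:\mathbb N\to D$ is a bijection and $<$ is a strict partial order on $D$ with $\{(m,n):\rho(m)<\rho(n)\}$ computable; a partial function into $D$ is partial (resp. total) computable if its composition with $\rho^{-1}$ is. For a partial $f:\mathbb X\times\mathbb N\to D$ monotone increasing in its second argument on its domain, $\max^{\mathcal D}f$ is the partial function defined exactly at those $x$ for which $\{f(x,t):t,\ f(x,t)\text{ defined}\}$ is finite and non-empty, with value its maximum. $\mathrm{Max}_{\mathrm{PR}}[\mathbb X\to\mathcal D]$ (resp. $\mathrm{Max}_{\mathrm{Rec}}[\mathbb X\to\mathcal D]$) is the class of all $\max^{\mathcal D}f$ with $f$ partial computable (resp. total computable) and monotone increasing in its second argument. $D^{\mathbb X}$ is the set of total functions $\mathbb X\to D$. *)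

theory Defs
  imports Main "HOL-Library.Nat_Bijection"
begin

datatype rf = Zr | Sc | Pj nat | Cn rf "rf list" | Pr rf rf | Mn rf

inductive eval :: "rf \<Rightarrow> nat list \<Rightarrow> nat \<Rightarrow> bool" where
  ev_Zr: "eval Zr xs 0"
| ev_Sc: "eval Sc (x # xs) (Suc x)"
| ev_Pj: "i < length xs \<Longrightarrow> eval (Pj i) xs (xs ! i)"
| ev_Cn: "list_all2 (\<lambda>g y. eval g xs y) gs ys \<Longrightarrow> eval f ys z \<Longrightarrow> eval (Cn f gs) xs z"
| ev_Pr0: "eval f xs y \<Longrightarrow> eval (Pr f g) (0 # xs) y"
| ev_PrS: "eval (Pr f g) (n # xs) r \<Longrightarrow> eval g (n # r # xs) y \<Longrightarrow> eval (Pr f g) (Suc n # xs) y"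
| ev_Mn: "eval f (y # xs) 0 \<Longrightarrow> (\<forall>z<y. \<exists>v. v \<noteq> 0 \<and> eval f (z # xs) v)
          \<Longrightarrow> eval (Mn f) xs y"

text \<open>Components: N, Z, or A* with A = {0..<k}, k > 0 (a finite alphabet).\<close>
datatype comp = CN | CZ | CW nat
datatype val = VN nat | VZ int | VW "nat list"

definition basic_space :: "comp list \<Rightarrow> bool" where
  "basic_space X \<longleftrightarrow> X \<noteq> [] \<and> (\<forall>k. CW k \<in> set X \<longrightarrow> k > 0)"

fun memc :: "comp \<Rightarrow> val \<Rightarrow> bool" where
  "memc CN (VN _) = True"
| "memc CZ (VZ _) = True"
| "memc (CW k) (VW w) = (\<forall>a\<in>set w. a < k)"
| "memc _ _ = False"

definition inX :: "comp list \<Rightarrow> val list \<Rightarrow> bool" where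
  "inX X x \<longleftrightarrow> list_all2 memc X x"

fun code_val :: "val \<Rightarrow> nat" where
  "code_val (VN n) = prod_encode (0, n)"
| "code_val (VZ z) = prod_encode (1, int_encode z)"
| "code_val (VW w) = prod_encode (2, list_encode w)"

definition code :: "val list \<Rightarrow> nat" where
  "code x = list_encode (map code_val x)"

definition computable_poset :: "('d \<Rightarrow> 'd \<Rightarrow> bool) \<Rightarrow> (nat \<Rightarrow> 'd) \<Rightarrow> bool" where
  "computable_poset lt \<rho> \<longleftrightarrow> bij \<rho> \<and>
     (\<forall>a. \<not> lt a a) \<and> (\<forall>a b c. lt a b \<longrightarrow> lt b c \<longrightarrow> lt a c) \<and>
     (\<exists>c. \<forall>m n. eval c [m, n] (if lt (\<rho> m) (\<rho> n) then 1 else 0))"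

definition pcomp2 :: "comp list \<Rightarrow> (nat \<Rightarrow> 'd) \<Rightarrow> (val list \<Rightarrow> nat \<Rightarrow> 'd option) \<Rightarrow> bool" where
  "pcomp2 X \<rho> f \<longleftrightarrow> (\<exists>c. \<forall>x t n. inX X x \<longrightarrow> (eval c [code x, t] n \<longleftrightarrow> f x t = Some (\<rho> n)))"

definition tcomp2 :: "comp list \<Rightarrow> (nat \<Rightarrow> 'd) \<Rightarrow> (val list \<Rightarrow> nat \<Rightarrow> 'd option) \<Rightarrow> bool" where
  "tcomp2 X \<rho> f \<longleftrightarrow> pcomp2 X \<rho> f \<and> (\<forall>x t. inX X x \<longrightarrow> f x t \<noteq> None)"

definition mono2 :: "comp list \<Rightarrow> ('d \<Rightarrow> 'd \<Rightarrow> bool) \<Rightarrow> (val list \<Rightarrow> nat \<Rightarrow> 'd option) \<Rightarrow> bool" where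
  "mono2 X lt f \<longleftrightarrow> (\<forall>x s t a b. inX X x \<longrightarrow> s \<le> t \<longrightarrow> f x s = Some a \<longrightarrow> f x t = Some b
                       \<longrightarrow> (a = b \<or> lt a b))"

definition maxD :: "('d \<Rightarrow> 'd \<Rightarrow> bool) \<Rightarrow> (val list \<Rightarrow> nat \<Rightarrow> 'd option) \<Rightarrow> val list \<Rightarrow> 'd option" where
  "maxD lt f x = (let S = {d. \<exists>t. f x t = Some d} in
     if finite S \<and> S \<noteq> {} then Some (THE d. d \<in> S \<and> (\<forall>e\<in>S. e = d \<or> lt e d)) else None)"

text \<open>Functions X \<rightharpoonup> D are represented as val list \<Rightarrow> 'd option, undefined outside X.\<close>
definition MaxPR :: "comp list \<Rightarrow> ('d \<Rightarrow> 'd \<Rightarrow> bool) \<Rightarrow> (nat \<Rightarrow> 'd) \<Rightarrow> (val list \<Rightarrow> 'd option) set" where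
  "MaxPR X lt \<rho> = {g. \<exists>f. pcomp2 X \<rho> f \<and> mono2 X lt f \<and>
                       (\<forall>x. g x = (if inX X x then maxD lt f x else None))}"

definition MaxRec :: "comp list \<Rightarrow> ('d \<Rightarrow> 'd \<Rightarrow> bool) \<Rightarrow> (nat \<Rightarrow> 'd) \<Rightarrow> (val list \<Rightarrow> 'd option) set" where
  "MaxRec X lt \<rho> = {g. \<exists>f. tcomp2 X \<rho> f \<and> mono2 X lt f \<and>
                       (\<forall>x. g x = (if inX X x then maxD lt f x else None))}"

definition TotalX :: "comp list \<Rightarrow> (val list \<Rightarrow> 'd option) set" where
  "TotalX X = {g. (\<forall>x. inX X x \<longrightarrow> g x \<noteq> None) \<and> (\<forall>x. \<not> inX X x \<longrightarrow> g x = None)}"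

end

theory Submission
  imports Defs
begin

text \<open>The inclusion of \<open>MaxRec\<close> in \<open>MaxPR\<close> is immediate. Conversely, let a program \<open>c\<close> compute
  the monotone partial \<open>f\<close>, with \<open>max f x\<close> defined for every \<open>x\<close>. Run \<open>c\<close> on \<open>(x, s)\<close> for all
  \<open>s \<le> T\<close>, cutting every unbounded search off at \<open>T\<close>, and let \<open>F x T\<close> be the result of the run with
  the largest \<open>s\<close> that halts. A larger clock sees every run a smaller one saw halt, so this \<open>s\<close>
  grows with \<open>T\<close> and \<open>F x\<close> is monotone because \<open>f x\<close> is. Every value of \<open>F x\<close> is one of \<open>f x\<close>,
  and the greatest value of \<open>f x\<close> is taken by \<open>F x T\<close> once \<open>T\<close> exceeds both the argument where
  \<open>f x\<close> attains it and the running time there; hence both maxima agree. \<open>F\<close> is made total by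
  starting the clock at the first time some run has halted, which exists because \<open>max f x\<close> is
  defined. The technical core is that the clocked evaluator is itself computed by a total program.\<close>

definition computes :: "rf \<Rightarrow> nat \<Rightarrow> (nat list \<Rightarrow> bool) \<Rightarrow> (nat list \<Rightarrow> nat) \<Rightarrow> bool" where
  "computes c n P F \<longleftrightarrow> (\<forall>xs. length xs = n \<longrightarrow> P xs \<longrightarrow> eval c xs (F xs))"

abbreviation computes_total :: "rf \<Rightarrow> nat \<Rightarrow> (nat list \<Rightarrow> nat) \<Rightarrow> bool" where
  "computes_total c n F \<equiv> computes c n (\<lambda>_. True) F"

lemma computesI: "(\<And>xs. length xs = n \<Longrightarrow> P xs \<Longrightarrow> eval c xs (F xs)) \<Longrightarrow> computes c n P F"
  by (auto simp: computes_def)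

lemma computesD: "computes c n P F \<Longrightarrow> length xs = n \<Longrightarrow> P xs \<Longrightarrow> eval c xs (F xs)"
  by (auto simp: computes_def)

lemma computes_cong:
  "computes c n P F \<Longrightarrow> (\<And>xs. length xs = n \<Longrightarrow> P xs \<Longrightarrow> F xs = F' xs) \<Longrightarrow> computes c n P F'"
  by (auto simp: computes_def)

lemma computes_Zr: "computes Zr n P (\<lambda>_. 0)"
  by (auto simp: computes_def intro: ev_Zr)

lemma computes_Pj: "i < n \<Longrightarrow> computes (Pj i) n P (\<lambda>xs. xs ! i)"
  by (auto simp: computes_def intro: ev_Pj)

lemma computes_Cn_partial:
  assumes f: "computes f (length Gs) Q F" and gs: "list_all2 (\<lambda>g G. computes g n P G) gs Gs"
    and Q: "\<And>xs. length xs = n \<Longrightarrow> P xs \<Longrightarrow> Q (map (\<lambda>G. G xs) Gs)"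
  shows "computes (Cn f gs) n P (\<lambda>xs. F (map (\<lambda>G. G xs) Gs))"
proof (rule computesI)
  fix xs assume xs: "length xs = n" "P xs"
  have "list_all2 (\<lambda>g y. eval g xs y) gs (map (\<lambda>G. G xs) Gs)"
    using gs xs unfolding list_all2_map2 by (auto elim!: list_all2_mono dest: computesD)
  moreover have "eval f (map (\<lambda>G. G xs) Gs) (F (map (\<lambda>G. G xs) Gs))"
    by (rule computesD[OF f]) (simp_all add: Q xs)
  ultimately show "eval (Cn f gs) xs (F (map (\<lambda>G. G xs) Gs))"
    by (rule ev_Cn)
qed

lemma computes_Cn:
  "computes_total f (length Gs) F \<Longrightarrow> list_all2 (\<lambda>g G. computes g n P G) gs Gs
    \<Longrightarrow> computes (Cn f gs) n P (\<lambda>xs. F (map (\<lambda>G. G xs) Gs))"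
  by (rule computes_Cn_partial) auto

lemma computes_Pj_shifted:
  "d + k \<le> n \<Longrightarrow> list_all2 (\<lambda>g G. computes g n P G) (map (\<lambda>i. Pj (i + d)) [0..<k]) (map (\<lambda>i xs. xs ! (i + d)) [0..<k])"
  by (induction k) (auto simp: list_all2_append intro: computes_Pj)

lemma computes_Cn_drop:
  assumes f: "computes_total f (length Gs + k) F" and gs: "list_all2 (\<lambda>g G. computes g (d + k) P G) gs Gs"
  shows "computes (Cn f (gs @ map (\<lambda>i. Pj (i + d)) [0..<k])) (d + k) P (\<lambda>xs. F (map (\<lambda>G. G xs) Gs @ drop d xs))"
proof -
  let ?Hs = "Gs @ map (\<lambda>i xs. xs ! (i + d)) [0..<k]"
  have "computes (Cn f (gs @ map (\<lambda>i. Pj (i + d)) [0..<k])) (d + k) P (\<lambda>xs. F (map (\<lambda>G. G xs) ?Hs))"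
    using f gs computes_Pj_shifted[of d k "d + k" P] by (intro computes_Cn list_all2_appendI) simp_all
  then show ?thesis
  proof (rule computes_cong)
    fix xs :: "nat list" assume "length xs = d + k"
    then have "map (\<lambda>i. xs ! (i + d)) [0..<k] = drop d xs"
      by (intro nth_equalityI) (auto simp: add.commute)
    then show "F (map (\<lambda>G. G xs) ?Hs) = F (map (\<lambda>G. G xs) Gs @ drop d xs)"
      by (simp add: comp_def)
  qed
qed

fun prec :: "(nat list \<Rightarrow> nat) \<Rightarrow> (nat list \<Rightarrow> nat) \<Rightarrow> nat \<Rightarrow> nat list \<Rightarrow> nat" where
  "prec F G 0 ys = F ys"
| "prec F G (Suc n) ys = G (n # prec F G n ys # ys)"

lemma computes_Pr:
  assumes f: "computes_total f n F" and g: "computes_total g (Suc (Suc n)) G"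
  shows "computes (Pr f g) (Suc n) P (\<lambda>xs. prec F G (hd xs) (tl xs))"
proof (rule computesI)
  fix xs :: "nat list" assume "length xs = Suc n"
  then obtain m ys where xs: "xs = m # ys" and ys: "length ys = n"
    by (cases xs) auto
  have "eval (Pr f g) (m # ys) (prec F G m ys)"
  proof (induction m)
    case 0
    show ?case using f ys by (auto intro: ev_Pr0 dest: computesD)
  next
    case (Suc m)
    show ?case using Suc.IH computesD[OF g, of "m # prec F G m ys # ys"] ys by (auto intro!: ev_PrS)
  qed
  then show "eval (Pr f g) xs (prec F G (hd xs) (tl xs))"
    using xs by simp
qed

lemma computes_Mn:
  assumes q: "computes_total q (Suc n) Q"
  shows "computes (Mn q) n (\<lambda>xs. \<exists>y. Q (y # xs) = 0) (\<lambda>xs. LEAST y. Q (y # xs) = 0)"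
proof (rule computesI)
  fix xs :: "nat list" assume xs: "length xs = n" and ex: "\<exists>y. Q (y # xs) = 0"
  let ?y = "LEAST y. Q (y # xs) = 0"
  have eval_Q: "eval q (z # xs) (Q (z # xs))" for z
    by (rule computesD[OF q]) (simp_all add: xs)
  have "Q (?y # xs) = 0"
    using ex by (rule LeastI_ex)
  moreover have "Q (z # xs) \<noteq> 0" if "z < ?y" for z
    using that by (rule not_less_Least)
  ultimately show "eval (Mn q) xs ?y"
    using eval_Q by (metis ev_Mn)
qed

definition rf_suc :: "rf \<Rightarrow> rf" where
  "rf_suc a = Cn Sc [a]"

fun rf_const :: "nat \<Rightarrow> rf" where
  "rf_const 0 = Zr"
| "rf_const (Suc n) = rf_suc (rf_const n)"

definition rf_ifz :: "rf \<Rightarrow> rf \<Rightarrow> rf \<Rightarrow> rf" where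
  "rf_ifz a b c = Cn (Pr (Pj 0) (Pj 3)) [a, b, c]"

definition rf_pred :: "rf \<Rightarrow> rf" where
  "rf_pred a = Cn (Pr Zr (Pj 0)) [a]"

definition rf_add :: "rf \<Rightarrow> rf \<Rightarrow> rf" where
  "rf_add a b = Cn (Pr (Pj 0) (rf_suc (Pj 1))) [a, b]"

fun rf_and :: "rf list \<Rightarrow> rf" where
  "rf_and [] = rf_const 1"
| "rf_and (r # rs) = rf_ifz r Zr (rf_and rs)"

lemma computes_rf_suc: "computes a n P A \<Longrightarrow> computes (rf_suc a) n P (\<lambda>xs. Suc (A xs))"
proof -
  assume a: "computes a n P A"
  have "computes_total Sc (length [A]) (\<lambda>ys. Suc (hd ys))"
    by (rule computesI) (auto simp: length_Suc_conv intro: ev_Sc)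
  from computes_Cn[OF this, where gs = "[a]"] a show ?thesis
    by (simp add: rf_suc_def)
qed

lemma computes_rf_const: "computes (rf_const k) n P (\<lambda>_. k)"
  by (induction k) (auto intro: computes_Zr computes_rf_suc)

lemma computes_rf_ifz:
  assumes "computes a n P A" "computes b n P B" "computes c n P C"
  shows "computes (rf_ifz a b c) n P (\<lambda>xs. if A xs = 0 then B xs else C xs)"
proof -
  have "computes_total (Pr (Pj 0) (Pj 3)) (length [A, B, C]) (\<lambda>xs. prec (\<lambda>ys. ys ! 0) (\<lambda>ys. ys ! 3) (hd xs) (tl xs))"
    by (simp, rule computes_Pr) (auto intro: computes_Pj)
  then have "computes_total (Pr (Pj 0) (Pj 3)) (length [A, B, C]) (\<lambda>xs. if xs ! 0 = 0 then xs ! 1 else xs ! 2)"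
  proof (rule computes_cong)
    fix xs :: "nat list" assume "length xs = length [A, B, C]"
    then obtain x y z where "xs = [x, y, z]" by (auto simp: length_Suc_conv)
    then show "prec (\<lambda>ys. ys ! 0) (\<lambda>ys. ys ! 3) (hd xs) (tl xs) = (if xs ! 0 = 0 then xs ! 1 else xs ! 2)"
      by (cases x) auto
  qed
  then have "computes (Cn (Pr (Pj 0) (Pj 3)) [a, b, c]) n P
      (\<lambda>xs. (\<lambda>ys. if ys ! 0 = 0 then ys ! 1 else ys ! 2) (map (\<lambda>G. G xs) [A, B, C]))"
    by (rule computes_Cn) (simp add: assms)
  then show ?thesis
    unfolding rf_ifz_def by (rule computes_cong) (simp add: numeral_2_eq_2)
qed

lemma computes_rf_pred: "computes a n P A \<Longrightarrow> computes (rf_pred a) n P (\<lambda>xs. A xs - 1)"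
proof -
  assume a: "computes a n P A"
  have "computes_total (Pr Zr (Pj 0)) (length [A]) (\<lambda>xs. prec (\<lambda>_. 0) (\<lambda>ys. ys ! 0) (hd xs) (tl xs))"
    by (simp, rule computes_Pr) (auto intro: computes_Pj computes_Zr)
  then have "computes_total (Pr Zr (Pj 0)) (length [A]) (\<lambda>xs. hd xs - 1)"
  proof (rule computes_cong)
    fix xs :: "nat list" assume "length xs = length [A]"
    then obtain x where "xs = [x]" by (auto simp: length_Suc_conv)
    then show "prec (\<lambda>_. 0) (\<lambda>ys. ys ! 0) (hd xs) (tl xs) = hd xs - 1"
      by (cases x) auto
  qed
  from computes_Cn[OF this, where gs = "[a]"] a show ?thesis
    by (simp add: rf_pred_def)
qed

lemma computes_rf_add:
  "computes a n P A \<Longrightarrow> computes b n P B \<Longrightarrow> computes (rf_add a b) n P (\<lambda>xs. A xs + B xs)"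
proof -
  assume a: "computes a n P A" and b: "computes b n P B"
  have "computes_total (Pr (Pj 0) (rf_suc (Pj 1))) (length [A, B])
      (\<lambda>xs. prec (\<lambda>ys. ys ! 0) (\<lambda>ys. Suc (ys ! 1)) (hd xs) (tl xs))"
    by (simp, rule computes_Pr) (auto intro: computes_Pj computes_rf_suc)
  then have "computes_total (Pr (Pj 0) (rf_suc (Pj 1))) (length [A, B]) (\<lambda>xs. xs ! 0 + xs ! 1)"
  proof (rule computes_cong)
    fix xs :: "nat list" assume "length xs = length [A, B]"
    then obtain x y where "xs = [x, y]" by (auto simp: length_Suc_conv)
    then show "prec (\<lambda>ys. ys ! 0) (\<lambda>ys. Suc (ys ! 1)) (hd xs) (tl xs) = xs ! 0 + xs ! 1"
      by (induction x arbitrary: xs) auto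
  qed
  from computes_Cn[OF this, where gs = "[a, b]"] a b show ?thesis
    by (simp add: rf_add_def)
qed

lemma computes_rf_and:
  "list_all2 (\<lambda>r G. computes r n P G) rs Gs
    \<Longrightarrow> computes (rf_and rs) n P (\<lambda>xs. if \<exists>G\<in>set Gs. G xs = 0 then 0 else 1)"
proof (induction rule: list_all2_induct)
  case Nil
  show ?case using computes_rf_const[of 1] by simp
next
  case (Cons r rs G Gs)
  from computes_rf_ifz[OF Cons.hyps(1) computes_Zr Cons.IH] show ?case
    unfolding rf_and.simps by (rule computes_cong) auto
qed

section \<open>Evaluation with a clock\<close>

fun prec_opt :: "(nat list \<Rightarrow> nat option) \<Rightarrow> (nat list \<Rightarrow> nat option) \<Rightarrow> nat \<Rightarrow> nat list \<Rightarrow> nat option" where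
  "prec_opt F G 0 ys = F ys"
| "prec_opt F G (Suc n) ys = (case prec_opt F G n ys of None \<Rightarrow> None | Some r \<Rightarrow> G (n # r # ys))"

text \<open>Bounded search for the least zero of \<open>F\<close> below \<open>m\<close>. Result \<open>y + 2\<close>: \<open>y\<close> is that zero;
  \<open>1\<close>: \<open>F\<close> is defined and nonzero below \<open>m\<close>; \<open>0\<close>: \<open>F\<close> is undefined before any zero.\<close>

fun mu_search :: "(nat list \<Rightarrow> nat option) \<Rightarrow> nat \<Rightarrow> nat list \<Rightarrow> nat" where
  "mu_search F 0 xs = 1"
| "mu_search F (Suc m) xs = (let h = mu_search F m xs in if h \<noteq> 1 then h else
     (case F (m # xs) of None \<Rightarrow> 0 | Some v \<Rightarrow> if v = 0 then m + 2 else 1))"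

text \<open>\<open>eval_clocked c k\<close> runs \<open>c\<close> with every unbounded search cut off at \<open>k\<close>.\<close>

primrec eval_clocked :: "rf \<Rightarrow> nat \<Rightarrow> nat list \<Rightarrow> nat option" where
  "eval_clocked Zr = (\<lambda>k xs. Some 0)"
| "eval_clocked Sc = (\<lambda>k xs. case xs of [] \<Rightarrow> None | x # _ \<Rightarrow> Some (Suc x))"
| "eval_clocked (Pj i) = (\<lambda>k xs. if i < length xs then Some (xs ! i) else None)"
| "eval_clocked (Cn f gs) = (\<lambda>k xs. let rs = map (\<lambda>h. h k xs) (map eval_clocked gs) in
      if None \<in> set rs then None else eval_clocked f k (map the rs))"
| "eval_clocked (Pr f g) = (\<lambda>k xs. case xs of [] \<Rightarrow> None
      | n # ys \<Rightarrow> prec_opt (eval_clocked f k) (eval_clocked g k) n ys)"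
| "eval_clocked (Mn f) = (\<lambda>k xs. let h = mu_search (eval_clocked f k) k xs in
      if 2 \<le> h then Some (h - 2) else None)"

lemma mu_search_eq_1_iff:
  "mu_search F m xs = 1 \<longleftrightarrow> (\<forall>z<m. \<exists>v. v \<noteq> 0 \<and> F (z # xs) = Some v)"
proof (induction m)
  case 0
  show ?case by simp
next
  case (Suc m)
  show ?case
  proof (cases "mu_search F m xs = 1")
    case True
    then show ?thesis using Suc by (auto simp: less_Suc_eq split: option.splits)
  next
    case False
    then show ?thesis using Suc by (auto simp: less_Suc_eq)
  qed
qed

lemma mu_search_eq_found_iff:
  "mu_search F m xs = y + 2 \<longleftrightarrow> y < m \<and> F (y # xs) = Some 0 \<and> (\<forall>z<y. \<exists>v. v \<noteq> 0 \<and> F (z # xs) = Some v)"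
proof (induction m)
  case 0
  show ?case by simp
next
  case (Suc m)
  show ?case
  proof (cases "mu_search F m xs = 1")
    case True
    then have "\<forall>z<m. \<exists>v. v \<noteq> 0 \<and> F (z # xs) = Some v"
      using mu_search_eq_1_iff by blast
    with True show ?thesis
      by (auto simp: less_Suc_eq split: option.splits)
  next
    case False
    then have "\<not> (\<forall>z<m. \<exists>v. v \<noteq> 0 \<and> F (z # xs) = Some v)"
      using mu_search_eq_1_iff by blast
    then have "y \<noteq> m" if "\<forall>z<y. \<exists>v. v \<noteq> 0 \<and> F (z # xs) = Some v"
      using that by blast
    with False Suc.IH show ?thesis
      by (auto simp: less_Suc_eq)
  qed
qed

lemma prec_opt_mono:
  "(\<And>ys v. F ys = Some v \<Longrightarrow> F' ys = Some v) \<Longrightarrow> (\<And>ys v. G ys = Some v \<Longrightarrow> G' ys = Some v)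
    \<Longrightarrow> prec_opt F G n ys = Some v \<Longrightarrow> prec_opt F' G' n ys = Some v"
  by (induction n arbitrary: v) (auto split: option.splits)

lemma eval_clocked_Cn_Some:
  assumes "list_all2 (\<lambda>g y. eval_clocked g k xs = Some y) gs ys"
  shows "eval_clocked (Cn f gs) k xs = eval_clocked f k ys"
proof -
  have results: "map (\<lambda>g. eval_clocked g k xs) gs = map Some ys"
    using assms by (induction rule: list_all2_induct) auto
  then have "None \<notin> set (map (\<lambda>g. eval_clocked g k xs) gs)" "map the (map (\<lambda>g. eval_clocked g k xs) gs) = ys"
    by (auto simp: comp_def)
  then show ?thesis
    by (simp add: Let_def comp_def)
qed

lemma eval_clocked_Cn_SomeD:
  assumes "eval_clocked (Cn f gs) k xs = Some n"
  obtains ys where "list_all2 (\<lambda>g y. eval_clocked g k xs = Some y) gs ys" and "eval_clocked f k ys = Some n"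
proof
  let ?ys = "map (\<lambda>g. the (eval_clocked g k xs)) gs"
  have "None \<notin> set (map (\<lambda>g. eval_clocked g k xs) gs)"
    using assms by (auto simp: Let_def comp_def split: if_splits)
  then show args: "list_all2 (\<lambda>g y. eval_clocked g k xs = Some y) gs ?ys"
    by (auto simp: list_all2_map2 list_all2_same) (metis image_eqI option.exhaust_sel)
  then have "eval_clocked (Cn f gs) k xs = eval_clocked f k ?ys"
    by (rule eval_clocked_Cn_Some)
  with assms show "eval_clocked f k ?ys = Some n"
    by simp
qed

lemma eval_clocked_mono: "eval_clocked c k xs = Some n \<Longrightarrow> k \<le> k' \<Longrightarrow> eval_clocked c k' xs = Some n"
proof (induction c arbitrary: xs n)
  case (Cn f gs)
  obtain ys where args: "list_all2 (\<lambda>g y. eval_clocked g k xs = Some y) gs ys"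
    and f: "eval_clocked f k ys = Some n"
    by (rule eval_clocked_Cn_SomeD[OF Cn.prems(1)])
  from args have "list_all2 (\<lambda>g y. eval_clocked g k' xs = Some y) gs ys"
    by (rule list.rel_mono_strong) (use Cn.IH(2) Cn.prems(2) in blast)
  then have "eval_clocked (Cn f gs) k' xs = eval_clocked f k' ys"
    by (rule eval_clocked_Cn_Some)
  with Cn.IH(1)[OF f Cn.prems(2)] show ?case
    by simp
next
  case (Pr f g)
  then show ?case
    by (auto split: list.splits elim!: prec_opt_mono[rotated 2])
next
  case (Mn f)
  then have "n < k" "eval_clocked f k (n # xs) = Some 0"
    "\<forall>z<n. \<exists>v. v \<noteq> 0 \<and> eval_clocked f k (z # xs) = Some v"
    using mu_search_eq_found_iff[of "eval_clocked f k" k xs n]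
    by (auto simp: Let_def split: if_splits)
  with Mn.IH Mn.prems(2) have "mu_search (eval_clocked f k') k' xs = n + 2"
    unfolding mu_search_eq_found_iff by (metis order_less_le_trans)
  then show ?case
    by simp
qed auto

lemma eval_clocked_sound: "eval_clocked c k xs = Some n \<Longrightarrow> eval c xs n"
proof (induction c arbitrary: xs n)
  case Zr
  then show ?case by (auto intro: ev_Zr)
next
  case Sc
  then show ?case by (auto intro: ev_Sc split: list.splits)
next
  case (Pj i)
  then show ?case by (auto intro: ev_Pj split: if_splits)
next
  case (Cn f gs)
  obtain ys where args: "list_all2 (\<lambda>g y. eval_clocked g k xs = Some y) gs ys"
    and f: "eval_clocked f k ys = Some n"
    by (rule eval_clocked_Cn_SomeD[OF Cn.prems(1)])
  have "list_all2 (\<lambda>g y. eval g xs y) gs ys"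
    using args by (rule list.rel_mono_strong) (use Cn.IH(2) in blast)
  then show ?case
    using Cn.IH(1)[OF f] by (rule ev_Cn)
next
  case (Pr f g)
  then obtain m ys where xs: "xs = m # ys"
    by (cases xs) auto
  have "prec_opt (eval_clocked f k) (eval_clocked g k) m ys = Some n \<Longrightarrow> eval (Pr f g) (m # ys) n" for n
  proof (induction m arbitrary: n)
    case 0
    then show ?case by (simp add: ev_Pr0 Pr.IH(1))
  next
    case (Suc m)
    then show ?case by (auto intro: ev_PrS Pr.IH(2) split: option.splits)
  qed
  with Pr.prems xs show ?case
    by simp
next
  case (Mn f)
  then have "eval_clocked f k (n # xs) = Some 0" "\<forall>z<n. \<exists>v. v \<noteq> 0 \<and> eval_clocked f k (z # xs) = Some v"
    using mu_search_eq_found_iff[of "eval_clocked f k" k xs n]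
    by (auto simp: Let_def split: if_splits)
  with Mn.IH show ?case
    by (blast intro: ev_Mn)
qed

lemma eval_clocked_common_clock:
  assumes "finite I" and "\<forall>i\<in>I. \<exists>k. eval_clocked (c i) k (xs i) = Some (v i)"
  shows "\<exists>K. \<forall>i\<in>I. eval_clocked (c i) K (xs i) = Some (v i)"
proof -
  from assms(2) obtain k where k: "\<And>i. i \<in> I \<Longrightarrow> eval_clocked (c i) (k i) (xs i) = Some (v i)"
    by metis
  have "eval_clocked (c i) (Max (k ` I)) (xs i) = Some (v i)" if "i \<in> I" for i
    using that assms(1) by (intro eval_clocked_mono[OF k]) simp_all
  then show ?thesis
    by blast
qed

lemma eval_clocked_complete: "eval c xs n \<Longrightarrow> \<exists>k. eval_clocked c k xs = Some n"
proof (induction rule: eval.induct)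
  case (ev_Pj i xs)
  then have "eval_clocked (Pj i) 0 xs = Some (xs ! i)" by simp
  then show ?case by blast
next
  case (ev_Cn xs gs ys f z)
  from ev_Cn.IH(1) have "\<forall>i\<in>{..<length gs}. \<exists>k. eval_clocked (gs ! i) k xs = Some (ys ! i)"
    by (auto simp: list_all2_conv_all_nth)
  then obtain k1 where "\<forall>i\<in>{..<length gs}. eval_clocked (gs ! i) k1 xs = Some (ys ! i)"
    using eval_clocked_common_clock[of "{..<length gs}" "(!) gs" "\<lambda>_. xs" "(!) ys"] by auto
  moreover obtain k2 where "eval_clocked f k2 ys = Some z"
    using ev_Cn.IH(2) by blast
  ultimately have args: "list_all2 (\<lambda>g y. eval_clocked g (max k1 k2) xs = Some y) gs ys"
    and f: "eval_clocked f (max k1 k2) ys = Some z"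
    using ev_Cn.IH(1) by (auto simp: list_all2_conv_all_nth intro: eval_clocked_mono)
  have "eval_clocked (Cn f gs) (max k1 k2) xs = Some z"
    using eval_clocked_Cn_Some[OF args] f by (rule trans)
  then show ?case
    by blast
next
  case (ev_PrS f g n xs r y)
  then obtain k1 k2 where k1: "eval_clocked (Pr f g) k1 (n # xs) = Some r"
    and k2: "eval_clocked g k2 (n # r # xs) = Some y"
    by blast
  have "eval_clocked (Pr f g) (max k1 k2) (n # xs) = Some r" "eval_clocked g (max k1 k2) (n # r # xs) = Some y"
    by (rule eval_clocked_mono[OF k1], simp, rule eval_clocked_mono[OF k2], simp)
  then have "eval_clocked (Pr f g) (max k1 k2) (Suc n # xs) = Some y"
    by simp
  then show ?case by blast
next
  case (ev_Mn f y xs)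
  obtain w where w: "\<forall>z<y. w z \<noteq> 0 \<and> (\<exists>k. eval_clocked f k (z # xs) = Some (w z))"
    using ev_Mn.IH(2) by metis
  define v where "v = w(y := 0)"
  have "\<forall>z\<in>{..y}. \<exists>k. eval_clocked f k (z # xs) = Some (v z)"
    using w ev_Mn.IH(1) by (auto simp: v_def le_less)
  then obtain K where K: "\<forall>z\<in>{..y}. eval_clocked f K (z # xs) = Some (v z)"
    using eval_clocked_common_clock[of "{..y}" "\<lambda>_. f" "\<lambda>z. z # xs" v] by auto
  let ?K = "max K (Suc y)"
  have "eval_clocked f ?K (z # xs) = Some (v z)" if "z \<le> y" for z
    using K that by (auto intro: eval_clocked_mono)
  then have "mu_search (eval_clocked f ?K) ?K xs = y + 2"
    using w unfolding mu_search_eq_found_iff by (auto simp: v_def)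
  then have "eval_clocked (Mn f) ?K xs = Some y"
    by simp
  then show ?case
    by blast
qed auto

lemma eval_deterministic: "eval c xs n \<Longrightarrow> eval c xs m \<Longrightarrow> n = m"
proof -
  assume "eval c xs n" "eval c xs m"
  then obtain k1 k2 where k1: "eval_clocked c k1 xs = Some n" and k2: "eval_clocked c k2 xs = Some m"
    using eval_clocked_complete by blast
  have "eval_clocked c (max k1 k2) xs = Some n" "eval_clocked c (max k1 k2) xs = Some m"
    by (rule eval_clocked_mono[OF k1], simp, rule eval_clocked_mono[OF k2], simp)
  then show "n = m"
    by simp
qed

section \<open>The clocked evaluator is a total program\<close>

fun opt_code :: "nat option \<Rightarrow> nat" where
  "opt_code None = 0"
| "opt_code (Some n) = Suc n"

lemma opt_code_eq_0_iff [simp]: "opt_code x = 0 \<longleftrightarrow> x = None"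
  by (cases x) auto

lemma opt_code_minus_1: "x \<noteq> None \<Longrightarrow> opt_code x - 1 = the x"
  by (cases x) auto

definition clocked_sem :: "rf \<Rightarrow> nat list \<Rightarrow> nat" where
  "clocked_sem c ys = opt_code (eval_clocked c (hd ys) (tl ys))"

primrec rf_clocked :: "rf \<Rightarrow> nat \<Rightarrow> rf" where
  "rf_clocked Zr = (\<lambda>n. rf_const 1)"
| "rf_clocked Sc = (\<lambda>n. if n = 0 then Zr else rf_suc (rf_suc (Pj 1)))"
| "rf_clocked (Pj i) = (\<lambda>n. if i < n then rf_suc (Pj (Suc i)) else Zr)"
| "rf_clocked (Cn f gs) = (\<lambda>n. rf_ifz (rf_and (map (\<lambda>h. h n) (map rf_clocked gs))) Zr
      (Cn (rf_clocked f (length gs)) (Pj 0 # map rf_pred (map (\<lambda>h. h n) (map rf_clocked gs)))))"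
| "rf_clocked (Pr f g) = (\<lambda>n. if n = 0 then Zr else
     Cn (Pr (rf_clocked f (n - 1))
           (rf_ifz (Pj 1) Zr (Cn (rf_clocked g (Suc n)) ([Pj 2, Pj 0, rf_pred (Pj 1)] @ map (\<lambda>i. Pj (i + 3)) [0..<n - 1]))))
        ([Pj 1, Pj 0] @ map (\<lambda>i. Pj (i + 2)) [0..<n - 1]))"
| "rf_clocked (Mn f) = (\<lambda>n. let
      v = Cn (rf_clocked f (Suc n)) ([Pj 2, Pj 0] @ map (\<lambda>i. Pj (i + 3)) [0..<n]);
      search = Pr (rf_const 1) (rf_ifz (Pj 1) Zr (rf_ifz (rf_pred (Pj 1))
                 (rf_ifz v Zr (rf_ifz (rf_pred v) (rf_suc (rf_suc (Pj 0))) (rf_const 1))) (Pj 1)));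
      h = Cn search ([Pj 0, Pj 0] @ map (\<lambda>i. Pj (i + 1)) [0..<n])
    in rf_ifz h Zr (rf_ifz (rf_pred h) Zr (rf_pred h)))"

lemma computes_rf_clocked_Zr: "computes_total (rf_clocked Zr n) (Suc n) (clocked_sem Zr)"
  unfolding rf_clocked.simps by (rule computes_cong[OF computes_rf_const]) (simp add: clocked_sem_def)

lemma computes_rf_clocked_Sc: "computes_total (rf_clocked Sc n) (Suc n) (clocked_sem Sc)"
proof (cases "n = 0")
  case True
  then show ?thesis
    by (auto intro!: computes_cong[OF computes_Zr] simp: clocked_sem_def length_Suc_conv)
next
  case False
  then have "computes_total (rf_suc (rf_suc (Pj 1))) (Suc n) (\<lambda>xs. Suc (Suc (xs ! 1)))"
    by (intro computes_rf_suc computes_Pj) simp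
  with False show ?thesis
    by (auto elim!: computes_cong simp: clocked_sem_def length_Suc_conv neq_Nil_conv)
qed

lemma computes_rf_clocked_Pj: "computes_total (rf_clocked (Pj i) n) (Suc n) (clocked_sem (Pj i))"
proof (cases "i < n")
  case True
  then have "computes_total (rf_suc (Pj (Suc i))) (Suc n) (\<lambda>xs. Suc (xs ! Suc i))"
    by (intro computes_rf_suc computes_Pj) simp
  with True show ?thesis
    by (auto elim!: computes_cong simp: clocked_sem_def length_Suc_conv)
next
  case False
  then show ?thesis
    by (auto intro!: computes_cong[OF computes_Zr] simp: clocked_sem_def length_Suc_conv)
qed

lemma clocked_sem_Cn:
  "clocked_sem (Cn f gs) (k # xs) =
    (if \<exists>g\<in>set gs. clocked_sem g (k # xs) = 0 then 0
     else clocked_sem f (k # map (\<lambda>g. clocked_sem g (k # xs) - 1) gs))"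
proof (cases "\<exists>g\<in>set gs. eval_clocked g k xs = None")
  case True
  then show ?thesis
    by (force simp: clocked_sem_def Let_def)
next
  case False
  then have args: "map (\<lambda>g. clocked_sem g (k # xs) - 1) gs = map (\<lambda>g. the (eval_clocked g k xs)) gs"
    by (auto simp: clocked_sem_def opt_code_minus_1)
  have "clocked_sem (Cn f gs) (k # xs) = clocked_sem f (k # map (\<lambda>g. the (eval_clocked g k xs)) gs)"
    using False by (force simp: clocked_sem_def Let_def comp_def)
  moreover have "\<not> (\<exists>g\<in>set gs. clocked_sem g (k # xs) = 0)"
    using False by (simp add: clocked_sem_def)
  ultimately show ?thesis
    unfolding args by (simp only: if_False)
qed

lemma computes_rf_clocked_Cn:
  assumes IHf: "\<And>n. computes_total (rf_clocked f n) (Suc n) (clocked_sem f)"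
    and IHg: "\<And>g n. g \<in> set gs \<Longrightarrow> computes_total (rf_clocked g n) (Suc n) (clocked_sem g)"
  shows "computes_total (rf_clocked (Cn f gs) n) (Suc n) (clocked_sem (Cn f gs))"
proof -
  define rs where "rs = map (\<lambda>g. rf_clocked g n) gs"
  define Gs where "Gs = map clocked_sem gs"
  have rs: "list_all2 (\<lambda>r G. computes_total r (Suc n) G) rs Gs"
    unfolding rs_def Gs_def list_all2_map1 list_all2_map2 list_all2_same using IHg by auto
  have args: "list_all2 (\<lambda>g G. computes_total g (Suc n) G)
      (Pj 0 # map rf_pred rs) ((\<lambda>ys. ys ! 0) # map (\<lambda>G ys. G ys - 1) Gs)"
    using list_all2_mono[OF rs computes_rf_pred] by (simp add: list_all2_map1 list_all2_map2 computes_Pj)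
  have f: "computes_total (rf_clocked f (length gs)) (length ((\<lambda>ys. ys ! 0) # map (\<lambda>G ys. G ys - 1) Gs)) (clocked_sem f)"
    using IHf by (simp add: Gs_def)
  have rs_eq: "map (\<lambda>h. h n) (map rf_clocked gs) = rs"
    by (simp add: rs_def)
  show ?thesis
    unfolding rf_clocked.simps rs_eq
  proof (rule computes_cong[OF computes_rf_ifz[OF computes_rf_and[OF rs] computes_Zr computes_Cn[OF f args]]])
    fix ys :: "nat list" assume "length ys = Suc n"
    then obtain k xs where "ys = k # xs"
      by (cases ys) auto
    then show "(if (if \<exists>G\<in>set Gs. G ys = 0 then 0 else 1::nat) = 0 then 0
        else clocked_sem f (map (\<lambda>G. G ys) ((\<lambda>ys. ys ! 0) # map (\<lambda>G ys. G ys - 1) Gs)))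
      = clocked_sem (Cn f gs) ys"
      by (cases "\<exists>g\<in>set gs. clocked_sem g (k # xs) = 0") (auto simp: Gs_def clocked_sem_Cn comp_def)
  qed
qed

lemma prec_clocked_Pr:
  "prec (clocked_sem f) (\<lambda>zs. if zs ! 1 = 0 then 0 else clocked_sem g (zs ! 2 # zs ! 0 # (zs ! 1 - 1) # drop 3 zs)) n (k # ys)
    = opt_code (prec_opt (eval_clocked f k) (eval_clocked g k) n ys)"
proof (induction n)
  case 0
  show ?case by (simp add: clocked_sem_def)
next
  case (Suc n)
  then show ?case
    by (cases "prec_opt (eval_clocked f k) (eval_clocked g k) n ys")
      (simp_all add: numeral_3_eq_3 numeral_2_eq_2 clocked_sem_def)
qed

lemma computes_rf_clocked_Pr:
  assumes IHf: "\<And>n. computes_total (rf_clocked f n) (Suc n) (clocked_sem f)"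
    and IHg: "\<And>n. computes_total (rf_clocked g n) (Suc n) (clocked_sem g)"
  shows "computes_total (rf_clocked (Pr f g) n) (Suc n) (clocked_sem (Pr f g))"
proof (cases n)
  case 0
  then show ?thesis
    by (auto intro!: computes_cong[OF computes_Zr] simp: clocked_sem_def length_Suc_conv)
next
  case (Suc a)
  define call_g where "call_g = Cn (rf_clocked g (Suc (Suc a))) ([Pj 2, Pj 0, rf_pred (Pj 1)] @ map (\<lambda>i. Pj (i + 3)) [0..<a])"
  define step where "step = rf_ifz (Pj 1) Zr call_g"
  have "computes_total call_g (3 + a)
      (\<lambda>zs. clocked_sem g (map (\<lambda>G. G zs) [\<lambda>zs. zs ! 2, \<lambda>zs. zs ! 0, \<lambda>zs. zs ! 1 - 1] @ drop 3 zs))"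
    unfolding call_g_def using IHg[of "Suc (Suc a)"]
    by (intro computes_Cn_drop list.rel_intros computes_Pj computes_rf_pred) (simp_all add: numeral_3_eq_3)
  then have "computes_total step (Suc (Suc (Suc a)))
      (\<lambda>zs. if zs ! 1 = 0 then 0 else clocked_sem g (zs ! 2 # zs ! 0 # (zs ! 1 - 1) # drop 3 zs))"
    unfolding step_def by (intro computes_rf_ifz computes_Pj computes_Zr) (simp_all add: numeral_3_eq_3)
  then have "computes_total (Pr (rf_clocked f a) step) (length [\<lambda>zs::nat list. zs ! 1, \<lambda>zs. zs ! 0] + a)
      (\<lambda>zs. prec (clocked_sem f) (\<lambda>zs. if zs ! 1 = 0 then 0 else clocked_sem g (zs ! 2 # zs ! 0 # (zs ! 1 - 1) # drop 3 zs))
        (hd zs) (tl zs))"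
    using computes_Pr[OF IHf] by simp
  then have "computes_total (rf_clocked (Pr f g) n) (Suc n)
      (\<lambda>zs. prec (clocked_sem f) (\<lambda>zs. if zs ! 1 = 0 then 0 else clocked_sem g (zs ! 2 # zs ! 0 # (zs ! 1 - 1) # drop 3 zs))
        (zs ! 1) (zs ! 0 # drop 2 zs))"
  proof -
    have "rf_clocked (Pr f g) n = Cn (Pr (rf_clocked f a) step) ([Pj 1, Pj 0] @ map (\<lambda>i. Pj (i + 2)) [0..<a])"
      by (simp add: Suc step_def call_g_def)
    then show ?thesis
      using computes_Cn_drop[OF \<open>computes_total (Pr (rf_clocked f a) step) _ _\<close>, where gs = "[Pj 1, Pj 0]" and d = 2]
      by (simp add: computes_Pj Suc numeral_2_eq_2)
  qed
  then show ?thesis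
  proof (rule computes_cong)
    fix ys :: "nat list" assume "length ys = Suc n"
    then obtain k m xs where "ys = k # m # xs"
      by (auto simp: Suc length_Suc_conv)
    then show "prec (clocked_sem f) (\<lambda>zs. if zs ! 1 = 0 then 0 else clocked_sem g (zs ! 2 # zs ! 0 # (zs ! 1 - 1) # drop 3 zs))
        (ys ! 1) (ys ! 0 # drop 2 ys) = clocked_sem (Pr f g) ys"
      using prec_clocked_Pr[of f g m k xs] by (simp add: clocked_sem_def)
  qed
qed

lemma prec_clocked_Mn:
  assumes "\<And>zs. S zs = (if zs ! 1 = 0 then 0 else if zs ! 1 - 1 = 0 then
        (if clocked_sem f (zs ! 2 # zs ! 0 # drop 3 zs) = 0 then 0
         else if clocked_sem f (zs ! 2 # zs ! 0 # drop 3 zs) - 1 = 0 then Suc (Suc (zs ! 0)) else 1)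
      else zs ! 1)"
  shows "prec (\<lambda>_. 1) S m (k # xs) = mu_search (eval_clocked f k) m xs"
proof (induction m)
  case 0
  show ?case by simp
next
  case (Suc m)
  have f: "clocked_sem f (k # m # xs) = opt_code (eval_clocked f k (m # xs))"
    by (simp add: clocked_sem_def)
  show ?case
  proof (cases "mu_search (eval_clocked f k) m xs = 1")
    case True
    then show ?thesis using Suc f assms[of "m # 1 # k # xs"]
      by (cases "eval_clocked f k (m # xs)") (auto simp: numeral_3_eq_3 numeral_2_eq_2)
  next
    case False
    then show ?thesis using Suc assms[of "m # mu_search (eval_clocked f k) m xs # k # xs"]
      by (auto simp: Let_def)
  qed
qed

lemma computes_rf_clocked_Mn:
  assumes IHf: "\<And>n. computes_total (rf_clocked f n) (Suc n) (clocked_sem f)"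
  shows "computes_total (rf_clocked (Mn f) n) (Suc n) (clocked_sem (Mn f))"
proof -
  define v where "v = Cn (rf_clocked f (Suc n)) ([Pj 2, Pj 0] @ map (\<lambda>i. Pj (i + 3)) [0..<n])"
  define search where "search = Pr (rf_const 1) (rf_ifz (Pj 1) Zr (rf_ifz (rf_pred (Pj 1))
      (rf_ifz v Zr (rf_ifz (rf_pred v) (rf_suc (rf_suc (Pj 0))) (rf_const 1))) (Pj 1)))"
  define h where "h = Cn search ([Pj 0, Pj 0] @ map (\<lambda>i. Pj (i + 1)) [0..<n])"
  define V where "V = (\<lambda>zs::nat list. clocked_sem f (zs ! 2 # zs ! 0 # drop 3 zs))"
  define S where "S = (\<lambda>zs::nat list. if zs ! 1 = 0 then 0 else if zs ! 1 - 1 = 0 then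
        (if V zs = 0 then 0 else if V zs - 1 = 0 then Suc (Suc (zs ! 0)) else 1) else zs ! 1)"
  have "computes_total v (3 + n) (\<lambda>zs. clocked_sem f (map (\<lambda>G. G zs) [\<lambda>zs. zs ! 2, \<lambda>zs. zs ! 0] @ drop 3 zs))"
    unfolding v_def using IHf[of "Suc n"]
    by (intro computes_Cn_drop list.rel_intros computes_Pj) simp_all
  then have v: "computes_total v (Suc (Suc (Suc n))) V"
    by (simp add: V_def numeral_3_eq_3)
  have "computes_total (rf_ifz (Pj 1) Zr (rf_ifz (rf_pred (Pj 1))
      (rf_ifz v Zr (rf_ifz (rf_pred v) (rf_suc (rf_suc (Pj 0))) (rf_const 1))) (Pj 1))) (Suc (Suc (Suc n))) S"
    unfolding S_def
    by (intro computes_rf_ifz computes_rf_pred computes_rf_suc computes_Pj computes_Zr computes_rf_const v) simp_all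
  then have "computes_total search (Suc (Suc n)) (\<lambda>zs. prec (\<lambda>_. 1) S (hd zs) (tl zs))"
    unfolding search_def by (intro computes_Pr computes_rf_const)
  then have "computes_total search (length [\<lambda>zs::nat list. zs ! 0, \<lambda>zs. zs ! 0] + n) (\<lambda>zs. prec (\<lambda>_. 1) S (hd zs) (tl zs))"
    by simp
  from computes_Cn_drop[OF this, where gs = "[Pj 0, Pj 0]" and d = 1]
  have "computes_total h (Suc n) (\<lambda>ys. prec (\<lambda>_. 1) S (ys ! 0) (ys ! 0 # drop 1 ys))"
    by (simp add: h_def computes_Pj)
  then have "computes_total h (Suc n) (\<lambda>ys. mu_search (eval_clocked f (hd ys)) (hd ys) (tl ys))"
  proof (rule computes_cong)
    fix ys :: "nat list" assume "length ys = Suc n"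
    then obtain k xs where "ys = k # xs"
      by (cases ys) auto
    moreover have "prec (\<lambda>_. 1) S k (k # xs) = mu_search (eval_clocked f k) k xs"
      by (rule prec_clocked_Mn) (simp add: S_def V_def)
    ultimately show "prec (\<lambda>_. 1) S (ys ! 0) (ys ! 0 # drop 1 ys) = mu_search (eval_clocked f (hd ys)) (hd ys) (tl ys)"
      by simp
  qed
  then have "computes_total (rf_clocked (Mn f) n) (Suc n)
      (\<lambda>ys. let r = mu_search (eval_clocked f (hd ys)) (hd ys) (tl ys) in if r = 0 then 0 else if r - 1 = 0 then 0 else r - 1)"
    unfolding rf_clocked.simps Let_def v_def[symmetric] search_def[symmetric] h_def[symmetric]
    by (intro computes_rf_ifz computes_rf_pred computes_Zr)
  then show ?thesis
    by (rule computes_cong) (auto simp: clocked_sem_def Let_def)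
qed

lemma computes_rf_clocked: "computes_total (rf_clocked c n) (Suc n) (clocked_sem c)"
proof (induction c arbitrary: n)
  case Zr
  show ?case by (rule computes_rf_clocked_Zr)
next
  case Sc
  show ?case by (rule computes_rf_clocked_Sc)
next
  case (Pj i)
  show ?case by (rule computes_rf_clocked_Pj)
next
  case (Cn f gs)
  then show ?case by (intro computes_rf_clocked_Cn)
next
  case (Pr f g)
  then show ?case by (intro computes_rf_clocked_Pr)
next
  case (Mn f)
  then show ?case by (intro computes_rf_clocked_Mn)
qed

text \<open>\<open>last_value B m\<close> is \<open>0\<close> if \<open>B\<close> is undefined below \<open>m\<close>, and otherwise \<open>1\<close> plus the value of \<open>B\<close>
  at the largest \<open>s < m\<close> where it is defined.\<close>

fun last_value :: "(nat \<Rightarrow> nat option) \<Rightarrow> nat \<Rightarrow> nat" where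
  "last_value B 0 = 0"
| "last_value B (Suc m) = (case B m of None \<Rightarrow> last_value B m | Some v \<Rightarrow> Suc v)"

lemma last_value_eq_0_iff: "last_value B m = 0 \<longleftrightarrow> (\<forall>s<m. B s = None)"
  by (induction m) (auto simp: less_Suc_eq split: option.splits)

lemma last_value_spec:
  "last_value B m \<noteq> 0 \<Longrightarrow> \<exists>s<m. B s = Some (last_value B m - 1) \<and> (\<forall>s'. s < s' \<and> s' < m \<longrightarrow> B s' = None)"
proof (induction m)
  case 0
  then show ?case by simp
next
  case (Suc m)
  show ?case
  proof (cases "B m")
    case None
    with Suc obtain s where "s < m" "B s = Some (last_value B m - 1)" "\<forall>s'. s < s' \<and> s' < m \<longrightarrow> B s' = None"
      by auto
    with None show ?thesis
      by (intro exI[of _ s]) (auto simp: less_Suc_eq)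
  next
    case (Some v)
    then show ?thesis
      by (intro exI[of _ m]) auto
  qed
qed

definition rf_clocked_call :: "rf \<Rightarrow> rf" where
  "rf_clocked_call c = Cn (rf_clocked c 2) [Pj 2, Pj 3, Pj 0]"

definition rf_last_value :: "rf \<Rightarrow> rf" where
  "rf_last_value c = Pr (rf_const 0) (rf_ifz (rf_clocked_call c) (Pj 1) (rf_clocked_call c))"

lemma computes_rf_clocked_call:
  "computes_total (rf_clocked_call c) 4 (\<lambda>zs. opt_code (eval_clocked c (zs ! 2) [zs ! 3, zs ! 0]))"
proof -
  have "computes_total (rf_clocked c 2) (length [\<lambda>zs::nat list. zs ! 2, \<lambda>zs. zs ! 3, \<lambda>zs. zs ! 0]) (clocked_sem c)"
    using computes_rf_clocked[of c 2] by (simp add: numeral_3_eq_3)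
  from computes_Cn[OF this, where gs = "[Pj 2, Pj 3, Pj 0]" and n = 4]
  show ?thesis
    unfolding rf_clocked_call_def by (simp add: computes_Pj clocked_sem_def)
qed

lemma computes_rf_last_value:
  "computes_total (rf_last_value c) 3 (\<lambda>zs. last_value (\<lambda>s. eval_clocked c (zs ! 1) [zs ! 2, s]) (zs ! 0))"
proof -
  define B where "B = (\<lambda>zs::nat list. opt_code (eval_clocked c (zs ! 2) [zs ! 3, zs ! 0]))"
  have call: "computes_total (rf_clocked_call c) (Suc (Suc (Suc (Suc 0)))) B"
    using computes_rf_clocked_call[of c] by (simp add: B_def eval_nat_numeral)
  have "computes_total (rf_ifz (rf_clocked_call c) (Pj 1) (rf_clocked_call c)) (Suc (Suc (Suc (Suc 0))))
      (\<lambda>zs. if B zs = 0 then zs ! 1 else B zs)"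
    by (rule computes_rf_ifz[OF call computes_Pj call]) simp
  then have "computes_total (rf_last_value c) (Suc (Suc (Suc 0)))
      (\<lambda>zs. prec (\<lambda>_. 0) (\<lambda>zs. if B zs = 0 then zs ! 1 else B zs) (hd zs) (tl zs))"
    unfolding rf_last_value_def by (rule computes_Pr[OF computes_rf_const])
  then show ?thesis
    unfolding numeral_3_eq_3
  proof (rule computes_cong)
    fix zs :: "nat list" assume "length zs = Suc (Suc (Suc 0))"
    then obtain m T a where zs: "zs = [m, T, a]"
      by (auto simp: length_Suc_conv)
    have "prec (\<lambda>_. 0) (\<lambda>zs. if B zs = 0 then zs ! 1 else B zs) m [T, a] = last_value (\<lambda>s. eval_clocked c T [a, s]) m"
      by (induction m) (auto simp: B_def numeral_3_eq_3 numeral_2_eq_2 split: option.splits)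
    with zs show "prec (\<lambda>_. 0) (\<lambda>zs. if B zs = 0 then zs ! 1 else B zs) (hd zs) (tl zs)
        = last_value (\<lambda>s. eval_clocked c (zs ! 1) [zs ! 2, s]) (zs ! 0)"
      by simp
  qed
qed

definition converges_by :: "rf \<Rightarrow> nat \<Rightarrow> nat \<Rightarrow> bool" where
  "converges_by c a y \<longleftrightarrow> (\<exists>s\<le>y. eval_clocked c y [a, s] \<noteq> None)"

definition start_time :: "rf \<Rightarrow> nat \<Rightarrow> nat" where
  "start_time c a = (LEAST y. converges_by c a y)"

definition latest_value :: "rf \<Rightarrow> nat \<Rightarrow> nat \<Rightarrow> nat" where
  "latest_value c a t = (let T = t + start_time c a in last_value (\<lambda>s. eval_clocked c T [a, s]) (Suc T) - 1)"

definition rf_start_time :: "rf \<Rightarrow> rf" where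
  "rf_start_time c = Cn (Mn (rf_ifz (Cn (rf_last_value c) [rf_suc (Pj 0), Pj 0, Pj 1]) (rf_const 1) Zr)) [Pj 0]"

definition rf_latest_value :: "rf \<Rightarrow> rf" where
  "rf_latest_value c = (let T = rf_add (Pj 1) (rf_start_time c) in
     rf_pred (Cn (rf_last_value c) [rf_suc T, T, Pj 0]))"

lemma converges_by_iff_last_value:
  "converges_by c a y \<longleftrightarrow> last_value (\<lambda>s. eval_clocked c y [a, s]) (Suc y) \<noteq> 0"
  unfolding converges_by_def last_value_eq_0_iff by (auto simp: less_Suc_eq_le)

lemma computes_rf_start_time:
  "computes (rf_start_time c) 2 (\<lambda>xs. \<exists>y. converges_by c (xs ! 0) y) (\<lambda>xs. start_time c (xs ! 0))"
proof -
  define Q where "Q = (\<lambda>zs::nat list. if last_value (\<lambda>s. eval_clocked c (zs ! 0) [zs ! 1, s]) (Suc (zs ! 0)) = 0 then 1 else 0::nat)"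
  define Gs where "Gs = [\<lambda>zs::nat list. Suc (zs ! 0), \<lambda>zs. zs ! 0, \<lambda>zs. zs ! 1]"
  have "computes_total (rf_last_value c) (length Gs)
      (\<lambda>zs. last_value (\<lambda>s. eval_clocked c (zs ! 1) [zs ! 2, s]) (zs ! 0))"
    using computes_rf_last_value[of c] by (simp add: Gs_def numeral_3_eq_3)
  then have "computes_total (Cn (rf_last_value c) [rf_suc (Pj 0), Pj 0, Pj 1]) (Suc 1)
      (\<lambda>zs. (\<lambda>zs. last_value (\<lambda>s. eval_clocked c (zs ! 1) [zs ! 2, s]) (zs ! 0)) (map (\<lambda>G. G zs) Gs))"
    by (rule computes_Cn) (simp add: Gs_def computes_Pj computes_rf_suc)
  then have "computes_total (Cn (rf_last_value c) [rf_suc (Pj 0), Pj 0, Pj 1]) (Suc 1)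
      (\<lambda>zs. last_value (\<lambda>s. eval_clocked c (zs ! 0) [zs ! 1, s]) (Suc (zs ! 0)))"
    by (rule computes_cong) (simp add: Gs_def)
  then have "computes_total (rf_ifz (Cn (rf_last_value c) [rf_suc (Pj 0), Pj 0, Pj 1]) (rf_const 1) Zr) (Suc 1) Q"
    unfolding Q_def by (rule computes_rf_ifz[OF _ computes_rf_const computes_Zr])
  from computes_Mn[OF this]
  have search: "computes (Mn (rf_ifz (Cn (rf_last_value c) [rf_suc (Pj 0), Pj 0, Pj 1]) (rf_const 1) Zr)) (length [\<lambda>xs::nat list. xs ! 0])
      (\<lambda>xs. \<exists>y. Q (y # xs) = 0) (\<lambda>xs. LEAST y. Q (y # xs) = 0)"
    by simp
  have Q: "Q [y, a] = 0 \<longleftrightarrow> converges_by c a y" for y a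
    by (simp add: Q_def converges_by_iff_last_value del: last_value.simps)
  have "computes (rf_start_time c) 2 (\<lambda>xs. \<exists>y. converges_by c (xs ! 0) y) (\<lambda>xs. LEAST y. Q (y # map (\<lambda>G. G xs) [\<lambda>xs. xs ! 0]) = 0)"
    unfolding rf_start_time_def
    by (rule computes_Cn_partial[OF search]) (simp_all add: computes_Pj Q)
  then show ?thesis
    by (rule computes_cong) (simp add: Q start_time_def)
qed

lemma computes_rf_latest_value:
  "computes (rf_latest_value c) 2 (\<lambda>xs. \<exists>y. converges_by c (xs ! 0) y) (\<lambda>xs. latest_value c (xs ! 0) (xs ! 1))"
proof -
  let ?P = "\<lambda>xs. \<exists>y. converges_by c (xs ! 0) y"
  let ?T = "rf_add (Pj 1) (rf_start_time c)"
  have T: "computes ?T 2 ?P (\<lambda>xs. xs ! 1 + start_time c (xs ! 0))"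
    by (intro computes_rf_add computes_Pj computes_rf_start_time) simp
  define Gs where "Gs = [\<lambda>xs::nat list. Suc (xs ! 1 + start_time c (xs ! 0)), \<lambda>xs. xs ! 1 + start_time c (xs ! 0), \<lambda>xs. xs ! 0]"
  have "computes_total (rf_last_value c) (length Gs)
      (\<lambda>zs. last_value (\<lambda>s. eval_clocked c (zs ! 1) [zs ! 2, s]) (zs ! 0))"
    using computes_rf_last_value[of c] by (simp add: Gs_def numeral_3_eq_3)
  then have "computes (Cn (rf_last_value c) [rf_suc ?T, ?T, Pj 0]) 2 ?P
      (\<lambda>xs. (\<lambda>zs. last_value (\<lambda>s. eval_clocked c (zs ! 1) [zs ! 2, s]) (zs ! 0)) (map (\<lambda>G. G xs) Gs))"
    by (rule computes_Cn) (unfold Gs_def, intro list.rel_intros computes_rf_suc T computes_Pj, simp)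
  from computes_rf_pred[OF this] show ?thesis
    unfolding rf_latest_value_def Let_def
    by (rule computes_cong) (simp add: Gs_def latest_value_def Let_def del: last_value.simps)
qed

lemma the_greatest_eq:
  assumes "\<And>d. \<not> lt d d" and "\<And>a b c. lt a b \<Longrightarrow> lt b c \<Longrightarrow> lt a c"
    and "d \<in> A" and "\<forall>e\<in>A. e = d \<or> lt e d"
  shows "(THE d. d \<in> A \<and> (\<forall>e\<in>A. e = d \<or> lt e d)) = d"
proof (rule the_equality)
  fix d' assume d': "d' \<in> A \<and> (\<forall>e\<in>A. e = d' \<or> lt e d')"
  with assms(3,4) have "d' = d \<or> lt d' d" "d = d' \<or> lt d d'"
    by blast+
  with assms(1,2) show "d' = d"
    by blast
qed (use assms in blast)

lemma finite_chain_has_greatest: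
  assumes "finite A" and "A \<noteq> {}" and "\<forall>a\<in>A. \<forall>b\<in>A. a = b \<or> lt a b \<or> lt b a"
    and "\<And>a b c. lt a b \<Longrightarrow> lt b c \<Longrightarrow> lt a c"
  shows "\<exists>d\<in>A. \<forall>e\<in>A. e = d \<or> lt e d"
  using assms(1-3)
proof (induction A rule: finite_ne_induct)
  case (singleton x)
  then show ?case by simp
next
  case (insert x A)
  then obtain d where d: "d \<in> A" "\<forall>e\<in>A. e = d \<or> lt e d"
    by auto
  with insert.prems consider "x = d \<or> lt x d" | "lt d x"
    by blast
  then show ?case
  proof cases
    case 1
    with d show ?thesis by blast
  next
    case 2
    have "e = x \<or> lt e x" if "e \<in> insert x A" for e
      using that d 2 assms(4)[of e d x] by auto
    then show ?thesis by blast
  qed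
qed

lemma maxD_eqI:
  assumes "\<And>d. \<not> lt d d" and "\<And>a b c. lt a b \<Longrightarrow> lt b c \<Longrightarrow> lt a c"
    and finite: "finite {d. \<exists>t. f x t = Some d}"
    and included: "{d. \<exists>t. g x t = Some d} \<subseteq> {d. \<exists>t. f x t = Some d}"
    and attained: "\<exists>t. g x t = Some d"
    and greatest: "\<forall>e\<in>{d. \<exists>t. f x t = Some d}. e = d \<or> lt e d"
  shows "maxD lt g x = maxD lt f x"
proof -
  define S where "S = {d. \<exists>t. f x t = Some d}"
  define S' where "S' = {d. \<exists>t. g x t = Some d}"
  have "d \<in> S'" "S' \<subseteq> S" "finite S'" "d \<in> S" "\<forall>e\<in>S. e = d \<or> lt e d"
    using attained included finite_subset[OF included finite] greatest by (auto simp: S_def S'_def)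
  moreover from calculation have "(THE d'. d' \<in> S' \<and> (\<forall>e\<in>S'. e = d' \<or> lt e d')) = d"
    by (intro the_greatest_eq[OF assms(1,2)]) auto
  moreover from calculation have "(THE d'. d' \<in> S \<and> (\<forall>e\<in>S. e = d' \<or> lt e d')) = d"
    by (intro the_greatest_eq[OF assms(1,2)])
  ultimately show ?thesis
    using finite unfolding maxD_def S_def[symmetric] S'_def[symmetric] Let_def by auto
qed

section \<open>Replacing a partial enumeration by a total one\<close>

locale computed_chain =
  fixes c :: rf and a :: nat and F :: "nat \<Rightarrow> 'd option" and \<rho> :: "nat \<Rightarrow> 'd" and lt :: "'d \<Rightarrow> 'd \<Rightarrow> bool"
  assumes eval_iff: "\<And>t n. eval c [a, t] n \<longleftrightarrow> F t = Some (\<rho> n)"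
    and bij: "bij \<rho>"
    and irrefl: "\<And>d. \<not> lt d d"
    and trans: "\<And>x y z. lt x y \<Longrightarrow> lt y z \<Longrightarrow> lt x z"
    and mono: "\<And>s t u v. s \<le> t \<Longrightarrow> F s = Some u \<Longrightarrow> F t = Some v \<Longrightarrow> u = v \<or> lt u v"
    and finite_values: "finite {d. \<exists>t. F t = Some d}"
    and values_nonempty: "{d. \<exists>t. F t = Some d} \<noteq> {}"
begin

lemma F_if_eval_clocked: "eval_clocked c k [a, s] = Some n \<Longrightarrow> F s = Some (\<rho> n)"
  using eval_clocked_sound eval_iff by blast

lemma eval_clocked_if_F:
  assumes "F s = Some d"
  obtains k where "eval_clocked c k [a, s] = Some (inv \<rho> d)"
proof -
  from assms bij have "F s = Some (\<rho> (inv \<rho> d))"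
    by (simp add: bij_is_surj surj_f_inv_f)
  then show ?thesis
    using eval_iff eval_clocked_complete that by blast
qed

lemma converges: "\<exists>y. converges_by c a y"
proof -
  obtain s d where "F s = Some d"
    using values_nonempty by blast
  then obtain k where "eval_clocked c k [a, s] = Some (inv \<rho> d)"
    by (rule eval_clocked_if_F)
  then have "eval_clocked c (max k s) [a, s] = Some (inv \<rho> d)"
    by (rule eval_clocked_mono) simp
  then have "converges_by c a (max k s)"
    unfolding converges_by_def using max.cobounded2 by blast
  then show ?thesis
    by blast
qed

text \<open>Since the clock is started at \<open>start_time c a\<close>, some run has already converged.\<close>

lemma latest_value_spec:
  fixes t :: nat
  defines "T \<equiv> t + start_time c a"
  shows "\<exists>s\<le>T. eval_clocked c T [a, s] = Some (latest_value c a t)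
    \<and> (\<forall>s'. s < s' \<and> s' \<le> T \<longrightarrow> eval_clocked c T [a, s'] = None)"
proof -
  have "converges_by c a (start_time c a)"
    unfolding start_time_def using converges by (rule LeastI_ex)
  then obtain s v where "s \<le> start_time c a" and "eval_clocked c (start_time c a) [a, s] = Some v"
    unfolding converges_by_def by blast
  moreover from this(2) have "eval_clocked c T [a, s] = Some v"
    by (rule eval_clocked_mono) (simp add: T_def)
  ultimately have "converges_by c a T"
    unfolding converges_by_def T_def by (intro exI[of _ s]) auto
  then have "last_value (\<lambda>s. eval_clocked c T [a, s]) (Suc T) \<noteq> 0"
    by (simp add: converges_by_iff_last_value del: last_value.simps)
  from last_value_spec[OF this] show ?thesis
    by (simp add: latest_value_def T_def[symmetric] Let_def less_Suc_eq_le del: last_value.simps)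
qed

lemma latest_value_in_values: "\<exists>s. F s = Some (\<rho> (latest_value c a t))"
  using latest_value_spec[of t] F_if_eval_clocked by blast

text \<open>A later clock sees every run an earlier clock saw converge, so the last converged run can only
  move to larger arguments, where \<open>F\<close> is larger.\<close>

lemma latest_value_mono:
  assumes "t1 \<le> t2"
  shows "\<rho> (latest_value c a t1) = \<rho> (latest_value c a t2) \<or> lt (\<rho> (latest_value c a t1)) (\<rho> (latest_value c a t2))"
proof -
  obtain s1 where s1: "s1 \<le> t1 + start_time c a"
    "eval_clocked c (t1 + start_time c a) [a, s1] = Some (latest_value c a t1)"
    using latest_value_spec by blast
  obtain s2 where s2: "eval_clocked c (t2 + start_time c a) [a, s2] = Some (latest_value c a t2)"
    "\<forall>s'. s2 < s' \<and> s' \<le> t2 + start_time c a \<longrightarrow> eval_clocked c (t2 + start_time c a) [a, s'] = None"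
    using latest_value_spec by blast
  have "eval_clocked c (t2 + start_time c a) [a, s1] = Some (latest_value c a t1)"
    using s1(2) by (rule eval_clocked_mono) (simp add: assms)
  moreover have "s1 \<le> t2 + start_time c a"
    using s1(1) assms by simp
  ultimately have "s1 \<le> s2"
    using s2(2) by (metis not_le option.distinct(1))
  then show ?thesis
    using mono F_if_eval_clocked[OF s1(2)] F_if_eval_clocked[OF s2(1)] by blast
qed

lemma values_chain: "\<forall>x\<in>{d. \<exists>t. F t = Some d}. \<forall>y\<in>{d. \<exists>t. F t = Some d}. x = y \<or> lt x y \<or> lt y x"
proof (intro ballI)
  fix x y assume "x \<in> {d. \<exists>t. F t = Some d}" "y \<in> {d. \<exists>t. F t = Some d}"
  then obtain s t where st: "F s = Some x" "F t = Some y"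
    by blast
  consider "s \<le> t" | "t \<le> s"
    by linarith
  then show "x = y \<or> lt x y \<or> lt y x"
    by cases (use mono st in blast)+
qed

lemma greatest_value_attained:
  obtains d where "\<forall>e\<in>{d. \<exists>t. F t = Some d}. e = d \<or> lt e d" and "\<exists>t. \<rho> (latest_value c a t) = d"
proof -
  obtain d where "d \<in> {d. \<exists>t. F t = Some d}" and greatest: "\<forall>e\<in>{d. \<exists>t. F t = Some d}. e = d \<or> lt e d"
    using finite_chain_has_greatest[OF finite_values values_nonempty values_chain] trans by blast
  then obtain s where "F s = Some d"
    by blast
  then obtain k where k: "eval_clocked c k [a, s] = Some (inv \<rho> d)"
    by (rule eval_clocked_if_F)
  define t where "t = max k s"
  obtain s' where s': "eval_clocked c (t + start_time c a) [a, s'] = Some (latest_value c a t)"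
    "\<forall>s''. s' < s'' \<and> s'' \<le> t + start_time c a \<longrightarrow> eval_clocked c (t + start_time c a) [a, s''] = None"
    using latest_value_spec by blast
  have "eval_clocked c (t + start_time c a) [a, s] = Some (inv \<rho> d)"
    using k by (rule eval_clocked_mono) (simp add: t_def)
  moreover have "s \<le> t + start_time c a"
    by (simp add: t_def)
  ultimately have "s \<le> s'"
    using s'(2) by (metis not_le option.distinct(1))
  moreover have "\<rho> (inv \<rho> d) = d"
    using bij by (simp add: bij_is_surj surj_f_inv_f)
  ultimately have "d = \<rho> (latest_value c a t) \<or> lt d (\<rho> (latest_value c a t))"
    using mono F_if_eval_clocked[OF k] F_if_eval_clocked[OF s'(1)] by metis
  moreover have "\<rho> (latest_value c a t) \<in> {d. \<exists>t. F t = Some d}"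
    using F_if_eval_clocked[OF s'(1)] by blast
  ultimately have "\<rho> (latest_value c a t) = d"
    using greatest irrefl trans by blast
  with greatest show ?thesis
    using that by blast
qed

lemma maxD_latest_value: "maxD lt (\<lambda>_ t. Some (\<rho> (latest_value c a t))) x = maxD lt (\<lambda>_. F) x"
proof -
  obtain d where "\<forall>e\<in>{d. \<exists>t. F t = Some d}. e = d \<or> lt e d" "\<exists>t. \<rho> (latest_value c a t) = d"
    by (rule greatest_value_attained)
  then show ?thesis
    using latest_value_in_values finite_values
    by (intro maxD_eqI[OF irrefl trans]) auto
qed

end

lemma tcomp2_latest_value:
  assumes "inj \<rho>" and "\<And>x. inX X x \<Longrightarrow> \<exists>y. converges_by c (code x) y"
  shows "tcomp2 X \<rho> (\<lambda>x t. if inX X x then Some (\<rho> (latest_value c (code x) t)) else None)"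
  unfolding tcomp2_def pcomp2_def
proof (intro conjI exI[of _ "rf_latest_value c"] allI impI)
  fix x t n assume x: "inX X x"
  have "eval (rf_latest_value c) [code x, t] (latest_value c (code x) t)"
    using computesD[OF computes_rf_latest_value, of "[code x, t]"] assms(2)[OF x] by simp
  with x assms(1) show "eval (rf_latest_value c) [code x, t] n
      \<longleftrightarrow> (if inX X x then Some (\<rho> (latest_value c (code x) t)) else None) = Some (\<rho> n)"
    by (auto simp: inj_eq dest: eval_deterministic)
qed auto

lemma MaxPR_total_subset_MaxRec:
  assumes "computable_poset lt \<rho>"
  shows "MaxPR X lt \<rho> \<inter> TotalX X \<subseteq> MaxRec X lt \<rho>"
proof
  fix g assume g: "g \<in> MaxPR X lt \<rho> \<inter> TotalX X"
  then obtain f c where f: "\<forall>x t n. inX X x \<longrightarrow> (eval c [code x, t] n \<longleftrightarrow> f x t = Some (\<rho> n))"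
    and mono: "mono2 X lt f" and g_eq: "\<forall>x. g x = (if inX X x then maxD lt f x else None)"
    unfolding MaxPR_def pcomp2_def by blast
  have poset: "bij \<rho>" "\<And>d. \<not> lt d d" "\<And>x y z. lt x y \<Longrightarrow> lt y z \<Longrightarrow> lt x z"
    using assms unfolding computable_poset_def by blast+
  have chain: "computed_chain c (code x) (f x) \<rho> lt" if x: "inX X x" for x
  proof
    show "eval c [code x, t] n \<longleftrightarrow> f x t = Some (\<rho> n)" for t n
      using f x by blast
    show "s \<le> t \<Longrightarrow> f x s = Some u \<Longrightarrow> f x t = Some v \<Longrightarrow> u = v \<or> lt u v" for s t u v
      using mono x unfolding mono2_def by blast
    from g x g_eq have "maxD lt f x \<noteq> None"
      by (auto simp: TotalX_def)
    then show "finite {d. \<exists>t. f x t = Some d}" "{d. \<exists>t. f x t = Some d} \<noteq> {}"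
      by (auto simp: maxD_def Let_def split: if_splits)
  qed (fact poset)+
  define f' where "f' = (\<lambda>x t. if inX X x then Some (\<rho> (latest_value c (code x) t)) else None)"
  have "tcomp2 X \<rho> f'"
    unfolding f'_def by (rule tcomp2_latest_value[OF bij_is_inj[OF poset(1)] computed_chain.converges[OF chain]])
  moreover have "mono2 X lt f'"
    unfolding mono2_def f'_def using computed_chain.latest_value_mono[OF chain] by auto
  moreover have "maxD lt f' x = maxD lt f x" if "inX X x" for x
    using computed_chain.maxD_latest_value[OF chain[OF that], of x] that
    by (simp add: f'_def maxD_def)
  ultimately show "g \<in> MaxRec X lt \<rho>"
    unfolding MaxRec_def using g_eq by auto
qed

theorem mainTheorem11:
  fixes X :: "comp list" and lt :: "'d \<Rightarrow> 'd \<Rightarrow> bool" and \<rho> :: "nat \<Rightarrow> 'd"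
  assumes "basic_space X" and "computable_poset lt \<rho>"
  shows "MaxPR X lt \<rho> \<inter> TotalX X = MaxRec X lt \<rho> \<inter> TotalX X"
proof
  show "MaxPR X lt \<rho> \<inter> TotalX X \<subseteq> MaxRec X lt \<rho> \<inter> TotalX X"
    using MaxPR_total_subset_MaxRec[OF assms(2)] by blast
  show "MaxRec X lt \<rho> \<inter> TotalX X \<subseteq> MaxPR X lt \<rho> \<inter> TotalX X"
    unfolding MaxRec_def MaxPR_def tcomp2_def by blast
qed

end
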